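(* Let $\mathbb{D}=\{z\in\mathbb{C}:|z|<1\}$, let $f$ be analytic on $\mathbb{D}$ and let $n\in\{2,3,\dots\}$. Then both \[ \phi_{\operatorname{n-Diam}}(r)=\frac{d_n(f(r\mathbb{D}))}{d_n(\mathbb{D})\,r}\quad\text{and}\quad \phi_{\operatorname{Cap}}(r)=\frac{\operatorname{Cap}(f(r\mathbb{D}))}{\operatorname{Cap}(r\mathbb{D})} \] are increasing convex functions of $\log r$ for $0<r<1$.
   Context: $r\mathbb{D}=\{z:|z|<r\}$ and $f(r\mathbb{D})$ is the image set. For $E\subset\mathbb{C}$, the $n$-diameter is $d_n(E)=\sup\big(\prod_{1\le j<k\le n}|\zeta_j-\zeta_k|\big)^{2/(n(n-1))}$ over all $n$-tuples of points of $E$; $d_n(\mathbb{D})=n^{1/(n-1)}$. $\operatorname{Cap}(E)$ is the logarithmic capacity, equal to the transfinite diameter $\lim_{n\to\infty}d_n(E)$; $\operatorname{Cap}(r\mathbb{D})=r$. *)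

theory Defs
  imports "HOL-Analysis.Analysis"
begin

definition n_diam :: "nat \<Rightarrow> complex set \<Rightarrow> real" where
  "n_diam n E = (SUP z \<in> {z :: nat \<Rightarrow> complex. \<forall>i<n. z i \<in> E}.
      (\<Prod>j<n. \<Prod>k\<in>{j<..<n}. cmod (z j - z k)) powr (2 / (real n * (real n - 1))))"

text \<open>Logarithmic capacity, as the transfinite diameter lim_{n->oo} d_n(E).\<close>
definition log_cap :: "complex set \<Rightarrow> real" where
  "log_cap E = lim (\<lambda>n. n_diam n E)"

end

theory Submission
  imports Defs "HOL-Complex_Analysis.Complex_Analysis"
begin

text \<open>Write \<open>\<zeta>\<^sub>i = f (r w\<^sub>i)\<close> with \<open>|w\<^sub>i| < 1\<close> for an \<open>n\<close>-tuple of points of \<open>f(r\<bbbD>)\<close>.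
  Then \<open>\<xi> \<mapsto> \<Prod>\<^sub>j\<^sub><\<^sub>k (f (\<xi> w\<^sub>j) - f (\<xi> w\<^sub>k))\<close> is holomorphic and on \<open>|\<xi>| = s\<close> its modulus
  is at most \<open>d\<^sub>n(f(s\<bbbD>))\<close> to the power \<open>n(n-1)/2\<close>, so Hadamard's three circles theorem makes
  \<open>log d\<^sub>n(f(e\<^sup>t\<bbbD>))\<close> convex in \<open>t\<close>; with the weighted AM-GM inequality \<open>d\<^sub>n(f(e\<^sup>t\<bbbD>)) / e\<^sup>t\<close>
  is convex. A convex function on \<open>(-\<infinity>, 0)\<close> that is bounded above near \<open>-\<infinity>\<close> is nondecreasing,
  and the bound holds because \<open>f\<close> is Lipschitz near \<open>0\<close> and \<open>d\<^sub>n(r\<bbbD>) = r d\<^sub>n(\<bbbD>)\<close>.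
  Finally \<open>d\<^sub>n\<close> decreases in \<open>n\<close>, the capacity is its limit, and monotonicity and convexity
  survive the limit.\<close>

section \<open>Hadamard's three circles theorem\<close>

lemma maximum_modulus_annulus:
  fixes F :: "complex \<Rightarrow> complex"
  assumes holo: "F holomorphic_on cball 0 r2 - ball 0 r1"
    and bound: "\<And>\<xi>. norm \<xi> = r1 \<or> norm \<xi> = r2 \<Longrightarrow> norm (F \<xi>) \<le> M"
    and z: "z \<in> cball 0 r2 - ball 0 r1"
  shows "norm (F z) \<le> M"
proof (rule maximum_modulus_frontier[of F "cball 0 r2 - ball 0 r1"])
  have closed: "closed (cball 0 r2 - ball (0::complex) r1)"
    by blast
  show "F holomorphic_on interior (cball 0 r2 - ball 0 r1)"
    by (meson holo holomorphic_on_subset interior_subset)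
  show "continuous_on (closure (cball 0 r2 - ball 0 r1)) F"
    using holomorphic_on_imp_continuous_on[OF holo] closed by (simp add: closure_closed)
  show "bounded (cball 0 r2 - ball (0::complex) r1)"
    by (meson bounded_cball bounded_subset Diff_subset)
  fix w :: complex
  assume w: "w \<in> frontier (cball 0 r2 - ball 0 r1)"
  have "open {w::complex. r1 < norm w \<and> norm w < r2}"
    by (intro open_Collect_conj open_Collect_less continuous_intros)
  then have "{w::complex. r1 < norm w \<and> norm w < r2} \<subseteq> interior (cball 0 r2 - ball 0 r1)"
    by (intro interior_maximal) auto
  with w closed have "w \<in> cball 0 r2 - ball 0 r1" "\<not> (r1 < norm w \<and> norm w < r2)"
    unfolding frontier_def by (auto simp: closure_closed)
  then have "norm w = r1 \<or> norm w = r2"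
    by auto
  then show "norm (F w) \<le> M"
    by (rule bound)
qed (use z in auto)

lemma powr_of_int_divide_power:
  fixes a :: real and q :: nat and p :: int
  assumes "a > 0" "q > 0"
  shows "(a powr (of_int p / of_nat q)) ^ q = a powi p"
  using assms by (simp add: powr_power powr_real_of_int')

text \<open>For exponents \<open>p/q\<close> the bound follows from the maximum principle applied to the
  single-valued function \<open>\<xi> powi p * h \<xi> ^ q\<close>; real exponents follow by density.\<close>

lemma three_circles_powi:
  fixes h :: "complex \<Rightarrow> complex"
  assumes holo: "h holomorphic_on cball 0 r2 - ball 0 r1" and "0 < r1"
    and bound1: "\<And>\<xi>. norm \<xi> = r1 \<Longrightarrow> norm (h \<xi>) \<le> A"
    and bound2: "\<And>\<xi>. norm \<xi> = r2 \<Longrightarrow> norm (h \<xi>) \<le> B"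
    and z: "z \<in> cball 0 r2 - ball 0 r1"
  shows "norm z powi p * norm (h z) ^ q \<le> max (r1 powi p * A ^ q) (r2 powi p * B ^ q)"
proof -
  define F where "F \<xi> = \<xi> powi p * h \<xi> ^ q" for \<xi>
  have norm_F: "norm (F \<xi>) = norm \<xi> powi p * norm (h \<xi>) ^ q" for \<xi>
    by (simp add: F_def norm_mult norm_power norm_power_int)
  have holo_F: "F holomorphic_on cball 0 r2 - ball 0 r1"
    unfolding F_def using \<open>0 < r1\<close> by (intro holomorphic_intros holo) auto
  have circle1: "norm (F \<xi>) \<le> r1 powi p * A ^ q" if "norm \<xi> = r1" for \<xi>
    unfolding norm_F using that bound1 \<open>0 < r1\<close> by (auto intro!: mult_left_mono power_mono)
  have circle2: "norm (F \<xi>) \<le> r2 powi p * B ^ q" if "norm \<xi> = r2" for \<xi>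
    unfolding norm_F using that bound2 \<open>0 < r1\<close> by (auto intro!: mult_left_mono power_mono)
  have "norm (F z) \<le> max (r1 powi p * A ^ q) (r2 powi p * B ^ q)"
  proof (rule maximum_modulus_annulus[OF holo_F _ z])
    fix \<xi> :: complex
    assume "norm \<xi> = r1 \<or> norm \<xi> = r2"
    then show "norm (F \<xi>) \<le> max (r1 powi p * A ^ q) (r2 powi p * B ^ q)"
      by (metis circle1 circle2 max.coboundedI1 max.coboundedI2)
  qed
  then show ?thesis
    unfolding norm_F .
qed

lemma three_circles_rat:
  fixes h :: "complex \<Rightarrow> complex"
  assumes holo: "h holomorphic_on cball 0 r2 - ball 0 r1" and "0 < r1"
    and "A > 0" "B > 0"
    and bound1: "\<And>\<xi>. norm \<xi> = r1 \<Longrightarrow> norm (h \<xi>) \<le> A"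
    and bound2: "\<And>\<xi>. norm \<xi> = r2 \<Longrightarrow> norm (h \<xi>) \<le> B"
    and z: "z \<in> cball 0 r2 - ball 0 r1" and "q > 0"
  shows "norm (h z) \<le> max ((r1 / norm z) powr (of_int p / of_nat q) * A)
                             ((r2 / norm z) powr (of_int p / of_nat q) * B)"
proof -
  define \<rho> where "\<rho> = norm z"
  have "\<rho> > 0"
    using z \<open>0 < r1\<close> unfolding \<rho>_def by auto
  define X where "X = (r1 / \<rho>) powr (of_int p / of_nat q) * A"
  define Y where "Y = (r2 / \<rho>) powr (of_int p / of_nat q) * B"
  have "X \<ge> 0" "Y \<ge> 0"
    using \<open>A > 0\<close> \<open>B > 0\<close> by (simp_all add: X_def Y_def)
  have "r1 powi p * A ^ q = X ^ q * \<rho> powi p" "r2 powi p * B ^ q = Y ^ q * \<rho> powi p"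
    unfolding X_def Y_def power_mult_distrib using \<open>\<rho> > 0\<close> \<open>0 < r1\<close> \<open>q > 0\<close> z
    by (simp_all add: powr_of_int_divide_power power_int_divide_distrib)
  then have "max (r1 powi p * A ^ q) (r2 powi p * B ^ q) \<le> max X Y ^ q * \<rho> powi p"
    using \<open>X \<ge> 0\<close> \<open>Y \<ge> 0\<close> \<open>\<rho> > 0\<close>
    by (auto intro!: max.boundedI mult_right_mono power_mono)
  moreover have "norm z powi p * norm (h z) ^ q \<le> max (r1 powi p * A ^ q) (r2 powi p * B ^ q)"
    using holo \<open>0 < r1\<close> bound1 bound2 z by (rule three_circles_powi)
  ultimately have "norm (h z) ^ q * \<rho> powi p \<le> max X Y ^ q * \<rho> powi p"
    unfolding \<rho>_def by (simp only: mult.commute order_trans)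
  then have "norm (h z) ^ q \<le> max X Y ^ q"
    using \<open>\<rho> > 0\<close> by (simp add: mult_le_cancel_right)
  moreover have "0 \<le> max X Y"
    using \<open>X \<ge> 0\<close> by simp
  ultimately show ?thesis
    unfolding X_def Y_def \<rho>_def using \<open>q > 0\<close> by (simp add: power_mono_iff)
qed

lemma three_circles_real:
  fixes h :: "complex \<Rightarrow> complex"
  assumes holo: "h holomorphic_on cball 0 r2 - ball 0 r1" and r1: "0 < r1"
    and AB: "A > 0" "B > 0"
    and bound1: "\<And>\<xi>. norm \<xi> = r1 \<Longrightarrow> norm (h \<xi>) \<le> A"
    and bound2: "\<And>\<xi>. norm \<xi> = r2 \<Longrightarrow> norm (h \<xi>) \<le> B"
    and z: "z \<in> cball 0 r2 - ball 0 r1"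
  shows "norm (h z) \<le> max ((r1 / norm z) powr s * A) ((r2 / norm z) powr s * B)"
proof -
  define g where "g s = max ((r1 / norm z) powr s * A) ((r2 / norm z) powr s * B)" for s
  have "norm z > 0"
    using r1 z by auto
  then have "continuous_on UNIV g"
    unfolding g_def using r1 z by (intro continuous_intros continuous_on_powr) auto
  then have "closed {s. norm (h z) \<le> g s}"
    by (intro closed_Collect_le continuous_intros)
  moreover have "\<rat> \<subseteq> {s. norm (h z) \<le> g s}"
  proof
    fix x :: real
    assume "x \<in> \<rat>"
    then obtain p q where "q > 0" "x = of_int p / of_int q"
      by (auto elim: Rats_cases')
    then have "x = of_int p / of_nat (nat q)" "nat q > 0"
      by simp_all
    then show "x \<in> {s. norm (h z) \<le> g s}"
      unfolding g_def using three_circles_rat[OF holo r1 AB bound1 bound2 z, of "nat q" p] by simp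
  qed
  ultimately have "closure \<rat> \<subseteq> {s. norm (h z) \<le> g s}"
    by (rule closure_minimal[rotated])
  then show ?thesis
    unfolding g_def Rats_closure_real by auto
qed

theorem hadamard_three_circles:
  fixes h :: "complex \<Rightarrow> complex"
  assumes holo: "h holomorphic_on cball 0 r2 - ball 0 r1" and r: "0 < r1" "r1 < r2"
    and AB: "A > 0" "B > 0"
    and bound1: "\<And>\<xi>. norm \<xi> = r1 \<Longrightarrow> norm (h \<xi>) \<le> A"
    and bound2: "\<And>\<xi>. norm \<xi> = r2 \<Longrightarrow> norm (h \<xi>) \<le> B"
    and uv: "0 \<le> u" "0 \<le> v" "u + v = 1"
    and z: "norm z = r1 powr u * r2 powr v"
  shows "norm (h z) \<le> A powr u * B powr v"
proof -
  have "r1 powr u * r1 powr v \<le> norm z" "norm z \<le> r2 powr u * r2 powr v"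
    unfolding z using r uv by (auto intro!: mult_left_mono mult_right_mono powr_mono2)
  then have z_annulus: "z \<in> cball 0 r2 - ball 0 r1"
    using r uv by (simp add: powr_add[symmetric])
  define s where "s = (ln A - ln B) / (ln r2 - ln r1)"
  have u: "u = 1 - v"
    using uv by simp
  have "ln (norm z) = u * ln r1 + v * ln r2"
    using z r by (simp add: ln_mult ln_powr)
  then have log_dist: "ln r1 - ln (norm z) = - v * (ln r2 - ln r1)"
    "ln r2 - ln (norm z) = u * (ln r2 - ln r1)"
    by (simp_all add: u algebra_simps)
  have "ln r2 - ln r1 > 0"
    using r by simp
  then have "s * (ln r1 - ln (norm z)) + ln A = u * ln A + v * ln B"
    "s * (ln r2 - ln (norm z)) + ln B = u * ln A + v * ln B"
    unfolding log_dist s_def by (simp_all add: u field_simps)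
  moreover have "(r / norm z) powr s * C = exp (s * (ln r - ln (norm z)) + ln C)"
    if "r > 0" "C > 0" for r C
    using that z_annulus r by (auto simp: powr_def ln_div exp_add)
  ultimately have "(r1 / norm z) powr s * A = exp (u * ln A + v * ln B)"
    "(r2 / norm z) powr s * B = exp (u * ln A + v * ln B)"
    using r AB by auto
  moreover have "exp (u * ln A + v * ln B) = A powr u * B powr v"
    using AB by (simp add: powr_def exp_add mult.commute)
  ultimately show ?thesis
    using three_circles_real[OF holo r(1) AB bound1 bound2 z_annulus, of s] by simp
qed

section \<open>The \<open>n\<close>-diameter\<close>

definition pairs :: "nat \<Rightarrow> (nat \<times> nat) set" where
  "pairs n = {(j, k). j < k \<and> k < n}"

definition pair_dist_prod :: "nat \<Rightarrow> (nat \<Rightarrow> complex) \<Rightarrow> real" where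
  "pair_dist_prod n z = (\<Prod>(j, k)\<in>pairs n. cmod (z j - z k))"

definition mean_pair_dist :: "nat \<Rightarrow> (nat \<Rightarrow> complex) \<Rightarrow> real" where
  "mean_pair_dist n z = pair_dist_prod n z powr (1 / card (pairs n))"

definition tuples_in :: "nat \<Rightarrow> 'a set \<Rightarrow> (nat \<Rightarrow> 'a) set" where
  "tuples_in n E = {z. \<forall>i<n. z i \<in> E}"

lemma finite_pairs [simp]: "finite (pairs n)"
  by (rule finite_subset[of _ "{..<n} \<times> {..<n}"]) (auto simp: pairs_def)

lemma card_pairs: "2 * card (pairs n) = n * (n - 1)"
proof (induction n)
  case (Suc n)
  have "pairs (Suc n) = pairs n \<union> (\<lambda>j. (j, n)) ` {..<n}"
    by (auto simp: pairs_def)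
  moreover have "pairs n \<inter> (\<lambda>j. (j, n)) ` {..<n} = {}"
    by (auto simp: pairs_def)
  ultimately have "card (pairs (Suc n)) = card (pairs n) + n"
    by (simp add: card_Un_disjoint card_image inj_on_def)
  with Suc show ?case
    by (cases n) (auto simp: algebra_simps)
qed (simp add: pairs_def)

lemma card_pairs_pos: "n \<ge> 2 \<Longrightarrow> card (pairs n) > 0"
  using card_pairs[of n] by (cases "card (pairs n)") auto

lemma n_diam_exponent: "2 / (real n * (real n - 1)) = 1 / real (card (pairs n))"
proof (cases "n = 0")
  case False
  then have "real n * (real n - 1) = 2 * real (card (pairs n))"
    using arg_cong[OF card_pairs[of n], of real] by (simp add: of_nat_diff)
  then show ?thesis
    by (cases "card (pairs n) = 0") auto
qed (simp add: pairs_def)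

lemma n_diam_eq_Sup: "n_diam n E = Sup (mean_pair_dist n ` tuples_in n E)"
proof -
  have "(\<Prod>j<n. \<Prod>k\<in>{j<..<n}. cmod (z j - z k)) = pair_dist_prod n z" for z
  proof -
    have "(SIGMA j:{..<n}. {j<..<n}) = pairs n"
      by (auto simp: pairs_def)
    then show ?thesis
      unfolding pair_dist_prod_def by (subst prod.Sigma) auto
  qed
  then show ?thesis
    by (simp add: n_diam_def mean_pair_dist_def tuples_in_def n_diam_exponent)
qed

lemma pair_dist_prod_nonneg: "pair_dist_prod n z \<ge> 0"
  unfolding pair_dist_prod_def by (intro prod_nonneg) auto

lemma mean_pair_dist_nonneg: "mean_pair_dist n z \<ge> 0"
  by (simp add: mean_pair_dist_def)

lemma pair_dist_prod_cong: "(\<And>i. i < n \<Longrightarrow> z i = z' i) \<Longrightarrow> pair_dist_prod n z = pair_dist_prod n z'"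
  unfolding pair_dist_prod_def by (intro prod.cong) (auto simp: pairs_def)

lemma pair_dist_prod_eq_power:
  assumes "n \<ge> 2"
  shows "pair_dist_prod n z = mean_pair_dist n z ^ card (pairs n)"
  using card_pairs_pos[OF assms] pair_dist_prod_nonneg[of n z]
  by (cases "pair_dist_prod n z = 0") (auto simp: mean_pair_dist_def powr_powr simp flip: powr_realpow)

lemma mean_pair_dist_le_iff:
  assumes "n \<ge> 2" "c \<ge> 0"
  shows "mean_pair_dist n z \<le> c \<longleftrightarrow> pair_dist_prod n z \<le> c ^ card (pairs n)"
  using assms card_pairs_pos[OF assms(1)]
  by (simp add: pair_dist_prod_eq_power power_mono_iff mean_pair_dist_nonneg)

lemma mean_pair_dist_le:
  assumes "n \<ge> 2" "c \<ge> 0" and dist: "\<And>j k. (j, k) \<in> pairs n \<Longrightarrow> cmod (z j - z k) \<le> c"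
  shows "mean_pair_dist n z \<le> c"
proof -
  have "pair_dist_prod n z \<le> (\<Prod>(j, k)\<in>pairs n. c)"
    unfolding pair_dist_prod_def by (intro prod_mono) (auto intro: dist)
  then show ?thesis
    using assms by (simp add: mean_pair_dist_le_iff)
qed

lemma tuples_in_const: "x \<in> E \<Longrightarrow> (\<lambda>_. x) \<in> tuples_in n E"
  by (simp add: tuples_in_def)

lemma tuples_in_image:
  assumes "\<zeta> \<in> tuples_in n (g ` E)"
  shows "\<exists>z\<in>tuples_in n E. \<forall>i<n. \<zeta> i = g (z i)"
proof -
  have "\<forall>i. \<exists>x. i < n \<longrightarrow> x \<in> E \<and> \<zeta> i = g x"
    using assms unfolding tuples_in_def by blast
  then obtain z where "\<And>i. i < n \<Longrightarrow> z i \<in> E \<and> \<zeta> i = g (z i)"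
    by metis
  then show ?thesis
    by (auto simp: tuples_in_def)
qed

lemma mean_pair_dist_le_n_diam:
  assumes "n \<ge> 2" "bounded E" "z \<in> tuples_in n E"
  shows "mean_pair_dist n z \<le> n_diam n E"
proof -
  have "mean_pair_dist n w \<le> diameter E" if "w \<in> tuples_in n E" for w
    using that assms by (intro mean_pair_dist_le diameter_ge_0)
      (auto simp: tuples_in_def pairs_def simp flip: dist_norm intro!: diameter_bounded_bound)
  then have "bdd_above (mean_pair_dist n ` tuples_in n E)"
    by (intro bdd_aboveI2)
  then show ?thesis
    unfolding n_diam_eq_Sup using assms(3) by (intro cSup_upper imageI)
qed

lemma n_diam_le:
  assumes "E \<noteq> {}" "\<And>z. z \<in> tuples_in n E \<Longrightarrow> mean_pair_dist n z \<le> c"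
  shows "n_diam n E \<le> c"
  unfolding n_diam_eq_Sup using assms tuples_in_const by (intro cSup_least) fastforce+

lemma n_diam_nonneg:
  assumes "n \<ge> 2" "bounded E" "E \<noteq> {}"
  shows "n_diam n E \<ge> 0"
proof -
  obtain x where "x \<in> E"
    using assms(3) by blast
  then show ?thesis
    using mean_pair_dist_le_n_diam[OF assms(1,2) tuples_in_const] mean_pair_dist_nonneg
    by (meson order_trans)
qed

lemma mean_pair_dist_lipschitz:
  assumes "n \<ge> 2" "L-lipschitz_on E g" "z \<in> tuples_in n E"
  shows "mean_pair_dist n (\<lambda>i. g (z i)) \<le> L * mean_pair_dist n z"
proof -
  have "L \<ge> 0"
    using assms(2) by (rule lipschitz_on_nonneg)
  have "pair_dist_prod n (\<lambda>i. g (z i)) \<le> (\<Prod>(j, k)\<in>pairs n. L * cmod (z j - z k))"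
    unfolding pair_dist_prod_def using assms(3)
    by (intro prod_mono) (auto simp: tuples_in_def pairs_def intro!: lipschitz_on_normD[OF assms(2)])
  also have "\<dots> = (L * mean_pair_dist n z) ^ card (pairs n)"
    by (simp add: prod.distrib case_prod_unfold power_mult_distrib
        pair_dist_prod_eq_power[OF assms(1), symmetric] pair_dist_prod_def)
  finally show ?thesis
    using assms(1) \<open>L \<ge> 0\<close> by (simp add: mean_pair_dist_le_iff mean_pair_dist_nonneg)
qed

lemma n_diam_image_le:
  assumes "n \<ge> 2" "L-lipschitz_on E g" "bounded E" "E \<noteq> {}"
  shows "n_diam n (g ` E) \<le> L * n_diam n E"
proof (rule n_diam_le)
  show "g ` E \<noteq> {}"
    using assms(4) by simp
  fix \<zeta>
  assume "\<zeta> \<in> tuples_in n (g ` E)"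
  then obtain z where z: "z \<in> tuples_in n E" "\<And>i. i < n \<Longrightarrow> \<zeta> i = g (z i)"
    by (blast dest: tuples_in_image)
  then have "mean_pair_dist n \<zeta> = mean_pair_dist n (\<lambda>i. g (z i))"
    unfolding mean_pair_dist_def by (metis pair_dist_prod_cong)
  also have "\<dots> \<le> L * mean_pair_dist n z"
    using assms(1,2) z(1) by (rule mean_pair_dist_lipschitz)
  also have "\<dots> \<le> L * n_diam n E"
    using assms z(1) lipschitz_on_nonneg
    by (intro mult_left_mono mean_pair_dist_le_n_diam) auto
  finally show "mean_pair_dist n \<zeta> \<le> L * n_diam n E" .
qed

lemma n_diam_ball:
  assumes "n \<ge> 2" "r > 0"
  shows "n_diam n (ball (0::complex) r) = r * n_diam n (ball 0 1)"
proof -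
  have scale: "n_diam n (ball (0::complex) (c * s)) \<le> c * n_diam n (ball 0 s)"
    if "c > 0" "s > 0" for c s
  proof -
    have lip: "(\<bar>c\<bar> * 1)-lipschitz_on (ball (0::complex) s) (\<lambda>z. c *\<^sub>R z)"
      by (intro lipschitz_on_cmult lipschitz_on_id)
    have "n_diam n ((\<lambda>z. c *\<^sub>R z) ` ball 0 s) \<le> c * n_diam n (ball 0 s)"
      using n_diam_image_le[OF assms(1) lip bounded_ball] that by simp
    moreover have "(\<lambda>z. c *\<^sub>R z) ` ball (0::complex) s = ball 0 (c * s)"
      using that by (simp add: ball_scale)
    ultimately show ?thesis
      by simp
  qed
  have "n_diam n (ball 0 1) \<le> 1 / r * n_diam n (ball (0::complex) r)"
    using scale[of "1 / r" r] assms by simp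
  with scale[of r 1] assms show ?thesis
    by (simp add: field_simps)
qed

section \<open>Monotonicity in \<open>n\<close> and the capacity\<close>

text \<open>\<open>z \<circ> skip i\<close> is the tuple \<open>z\<close> with its \<open>i\<close>-th point deleted.\<close>

definition skip :: "nat \<Rightarrow> nat \<Rightarrow> nat" where
  "skip i m = (if m < i then m else Suc m)"

lemma bij_betw_skip_pairs:
  assumes "i < Suc n"
  shows "bij_betw (map_prod (skip i) (skip i)) (pairs n) {(j, k) \<in> pairs (Suc n). j \<noteq> i \<and> k \<noteq> i}"
proof (rule bij_betw_imageI)
  show "inj_on (map_prod (skip i) (skip i)) (pairs n)"
    by (auto simp: inj_on_def skip_def split: if_splits)
  show "map_prod (skip i) (skip i) ` pairs n = {(j, k) \<in> pairs (Suc n). j \<noteq> i \<and> k \<noteq> i}"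
  proof safe
    fix j k
    assume "(j, k) \<in> pairs (Suc n)" "j \<noteq> i" "k \<noteq> i"
    moreover define unskip where "unskip m = (if m < i then m else m - 1)" for m
    ultimately have "(unskip j, unskip k) \<in> pairs n" "skip i (unskip j) = j" "skip i (unskip k) = k"
      using assms by (auto simp: pairs_def skip_def)
    then show "(j, k) \<in> map_prod (skip i) (skip i) ` pairs n"
      by force
  qed (auto simp: pairs_def skip_def split: if_splits)
qed

text \<open>Every pair of points of an \<open>(n+1)\<close>-tuple survives the deletion of each of the
  other \<open>n - 1\<close> points.\<close>

lemma prod_pair_dist_prod_skip:
  "(\<Prod>i<Suc n. pair_dist_prod n (z \<circ> skip i)) = pair_dist_prod (Suc n) z ^ (n - 1)"
proof -
  define d where "d p = cmod (z (fst p) - z (snd p))" for p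
  have "pair_dist_prod n (z \<circ> skip i) = (\<Prod>p\<in>pairs (Suc n). if fst p \<noteq> i \<and> snd p \<noteq> i then d p else 1)"
    if "i < Suc n" for i
    using prod.reindex_bij_betw[OF bij_betw_skip_pairs[OF that], of d]
    unfolding d_def by (simp add: pair_dist_prod_def case_prod_unfold prod.inter_filter)
  then have "(\<Prod>i<Suc n. pair_dist_prod n (z \<circ> skip i))
      = (\<Prod>p\<in>pairs (Suc n). \<Prod>i<Suc n. if fst p \<noteq> i \<and> snd p \<noteq> i then d p else 1)"
    by (simp add: prod.swap[of _ "pairs (Suc n)"])
  also have "\<dots> = (\<Prod>p\<in>pairs (Suc n). d p ^ (n - 1))"
  proof (rule prod.cong[OF refl])
    fix p
    assume "p \<in> pairs (Suc n)"
    then have "{i \<in> {..<Suc n}. fst p \<noteq> i \<and> snd p \<noteq> i} = {..<Suc n} - {fst p, snd p}"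
      "card ({..<Suc n} - {fst p, snd p}) = n - 1"
      by (auto simp: pairs_def card_Diff_subset)
    then have card_survivors: "card {i \<in> {..<Suc n}. fst p \<noteq> i \<and> snd p \<noteq> i} = n - 1"
      by simp
    have "(\<Prod>i<Suc n. if fst p \<noteq> i \<and> snd p \<noteq> i then d p else 1)
        = (\<Prod>i\<in>{i \<in> {..<Suc n}. fst p \<noteq> i \<and> snd p \<noteq> i}. d p)"
      by (rule prod.inter_filter[symmetric]) simp
    with card_survivors
    show "(\<Prod>i<Suc n. if fst p \<noteq> i \<and> snd p \<noteq> i then d p else 1) = d p ^ (n - 1)"
      by simp
  qed
  also have "\<dots> = pair_dist_prod (Suc n) z ^ (n - 1)"
    by (simp add: pair_dist_prod_def d_def case_prod_unfold prod_power_distrib)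
  finally show ?thesis .
qed

lemma n_diam_Suc_le:
  assumes n: "n \<ge> 2" and E: "bounded E" "E \<noteq> {}"
  shows "n_diam (Suc n) E \<le> n_diam n E"
proof (rule n_diam_le[OF E(2)])
  fix z
  assume z: "z \<in> tuples_in (Suc n) E"
  define d where "d = n_diam n E"
  have "d \<ge> 0"
    unfolding d_def using n E by (rule n_diam_nonneg)
  have "pair_dist_prod n (z \<circ> skip i) \<le> d ^ card (pairs n)" if "i < Suc n" for i
  proof -
    have "z \<circ> skip i \<in> tuples_in n E"
      using z that by (auto simp: tuples_in_def skip_def)
    then have "mean_pair_dist n (z \<circ> skip i) \<le> d"
      unfolding d_def using n E(1) by (intro mean_pair_dist_le_n_diam)
    then show ?thesis
      using n \<open>d \<ge> 0\<close> by (simp add: mean_pair_dist_le_iff)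
  qed
  then have "(\<Prod>i<Suc n. pair_dist_prod n (z \<circ> skip i)) \<le> (\<Prod>i<Suc n. d ^ card (pairs n))"
    by (intro prod_mono) (auto simp: pair_dist_prod_nonneg)
  then have "pair_dist_prod (Suc n) z ^ (n - 1) \<le> (d ^ card (pairs n)) ^ Suc n"
    by (simp only: prod_pair_dist_prod_skip prod_constant card_lessThan)
  also have "\<dots> = (d ^ card (pairs (Suc n))) ^ (n - 1)"
  proof -
    have "2 * (card (pairs n) * Suc n) = 2 * (card (pairs (Suc n)) * (n - 1))"
      using card_pairs[of n] card_pairs[of "Suc n"] by (simp add: algebra_simps)
    then have "card (pairs n) * Suc n = card (pairs (Suc n)) * (n - 1)"
      by linarith
    then show ?thesis
      by (simp only: power_mult[symmetric])
  qed
  finally have "pair_dist_prod (Suc n) z \<le> d ^ card (pairs (Suc n))"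
    using n \<open>d \<ge> 0\<close> by (simp add: power_mono_iff pair_dist_prod_nonneg)
  then show "mean_pair_dist (Suc n) z \<le> d"
    using n \<open>d \<ge> 0\<close> by (simp add: mean_pair_dist_le_iff)
qed

lemma n_diam_LIMSEQ_log_cap:
  assumes "bounded E" "E \<noteq> {}"
  shows "(\<lambda>n. n_diam n E) \<longlonglongrightarrow> log_cap E"
proof -
  have "decseq (\<lambda>m. n_diam (m + 2) E)"
    using n_diam_Suc_le[OF _ assms] by (intro decseq_SucI) simp
  moreover have "n_diam (m + 2) E \<ge> 0" for m
    using assms by (intro n_diam_nonneg) auto
  ultimately obtain L where "(\<lambda>m. n_diam (m + 2) E) \<longlonglongrightarrow> L"
    using decseq_convergent[of _ 0] by blast
  then have "(\<lambda>n. n_diam n E) \<longlonglongrightarrow> L"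
    by (rule LIMSEQ_offset)
  then show ?thesis
    unfolding log_cap_def by (simp add: limI)
qed

lemma log_cap_nonneg:
  assumes "bounded E" "E \<noteq> {}"
  shows "log_cap E \<ge> 0"
  using n_diam_LIMSEQ_log_cap[OF assms] n_diam_nonneg[OF _ assms]
  by (intro LIMSEQ_le_const) (auto intro: exI[of _ 2])

lemma log_cap_ball:
  assumes "r > 0"
  shows "log_cap (ball (0::complex) r) = r * log_cap (ball 0 1)"
proof -
  have "(\<lambda>n. r * n_diam n (ball (0::complex) 1)) \<longlonglongrightarrow> r * log_cap (ball 0 1)"
    by (intro tendsto_mult_left n_diam_LIMSEQ_log_cap) auto
  moreover have "\<forall>\<^sub>F n in sequentially. r * n_diam n (ball 0 1) = n_diam n (ball (0::complex) r)"
    unfolding eventually_sequentially using n_diam_ball[OF _ assms] by (intro exI[of _ 2]) simp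
  ultimately have "(\<lambda>n. n_diam n (ball (0::complex) r)) \<longlonglongrightarrow> r * log_cap (ball 0 1)"
    by (rule Lim_transform_eventually)
  moreover have "(\<lambda>n. n_diam n (ball (0::complex) r)) \<longlonglongrightarrow> log_cap (ball 0 r)"
    using assms by (intro n_diam_LIMSEQ_log_cap) auto
  ultimately show ?thesis
    using LIMSEQ_unique by blast
qed

lemma mono_on_if_convex_on_bounded_at_bot:
  fixes g :: "real \<Rightarrow> real"
  assumes convex: "convex_on {..<a} g" and bounded: "\<And>t. t \<le> T \<Longrightarrow> g t \<le> C"
  shows "mono_on {..<a} g"
proof (rule mono_onI)
  fix x y
  assume xy: "x \<in> {..<a}" "y \<in> {..<a}" "x \<le> y"
  have "\<forall>\<^sub>F t in at_bot. g x - g y \<le> (C - g y) * (y - x) * inverse (y - t)"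
    using eventually_le_at_bot[of "min T (x - 1)"]
  proof (rule eventually_mono)
    fix t
    assume "t \<le> min T (x - 1)"
    then have "t < x" "x \<in> {t..y}" "convex_on {t..y} g"
      using xy by (auto intro: convex_on_subset[OF convex])
    then have "g x \<le> (g t - g y) / (y - t) * (y - x) + g y"
      by (intro convex_onD_Icc'')
    moreover have "(g t - g y) / (y - t) * (y - x) \<le> (C - g y) / (y - t) * (y - x)"
      using \<open>t \<le> min T (x - 1)\<close> \<open>t < x\<close> xy bounded
      by (intro mult_right_mono divide_right_mono) auto
    ultimately show "g x - g y \<le> (C - g y) * (y - x) * inverse (y - t)"
      by (simp add: field_simps)
  qed
  moreover have "((\<lambda>t. (C - g y) * (y - x) * inverse (y - t)) \<longlongrightarrow> 0) at_bot"
    by (intro tendsto_mult_right_zero tendsto_inverse_0_at_top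
        filterlim_tendsto_add_at_top[OF tendsto_const filterlim_uminus_at_top_at_bot, simplified])
  ultimately have "g x - g y \<le> 0"
    by (intro tendsto_le[OF trivial_limit_at_bot_linorder _ tendsto_const])
  then show "g x \<le> g y"
    by simp
qed

lemma mono_on_cdiv:
  fixes g :: "'a::order \<Rightarrow> real"
  assumes "c \<ge> 0" "mono_on S g"
  shows "mono_on S (\<lambda>x. g x / c)"
  using assms by (auto intro!: mono_onI divide_right_mono dest: mono_onD)

lemma mono_on_LIMSEQ:
  fixes g :: "'a::order \<Rightarrow> real"
  assumes "\<And>x. x \<in> S \<Longrightarrow> (\<lambda>m. F m x) \<longlonglongrightarrow> g x"
    and "\<forall>\<^sub>F m in sequentially. mono_on S (F m)"
  shows "mono_on S g"
proof (rule mono_onI)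
  fix x y
  assume "x \<in> S" "y \<in> S" "x \<le> y"
  then have "\<forall>\<^sub>F m in sequentially. F m x \<le> F m y"
    using assms(2) by (auto elim: eventually_mono dest: mono_onD)
  with \<open>x \<in> S\<close> \<open>y \<in> S\<close> show "g x \<le> g y"
    by (intro tendsto_le[OF trivial_limit_sequentially assms(1) assms(1)])
qed

lemma convex_on_LIMSEQ:
  fixes g :: "real \<Rightarrow> real"
  assumes "convex S" "\<And>x. x \<in> S \<Longrightarrow> (\<lambda>m. F m x) \<longlonglongrightarrow> g x"
    and "\<forall>\<^sub>F m in sequentially. convex_on S (F m)"
  shows "convex_on S g"
proof (rule convex_onI[OF _ assms(1)])
  fix t x y :: real
  assume t: "0 < t" "t < 1" and xy: "x \<in> S" "y \<in> S"
  define z where "z = (1 - t) *\<^sub>R x + t *\<^sub>R y"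
  have "z \<in> S"
    unfolding z_def using t xy by (intro convexD[OF assms(1)]) auto
  have "F m z \<le> (1 - t) * F m x + t * F m y" if "convex_on S (F m)" for m
    unfolding z_def using convex_onD[OF that, of t x y] t xy by simp
  then have "\<forall>\<^sub>F m in sequentially. F m z \<le> (1 - t) * F m x + t * F m y"
    using assms(3) by (auto elim: eventually_mono)
  moreover have "(\<lambda>m. (1 - t) * F m x + t * F m y) \<longlonglongrightarrow> (1 - t) * g x + t * g y"
    using xy by (intro tendsto_intros assms(2))
  ultimately show "g z \<le> (1 - t) * g x + t * g y"
    by (intro tendsto_le[OF trivial_limit_sequentially _ assms(2)[OF \<open>z \<in> S\<close>]])
qed

lemma holomorphic_on_lipschitz_on:
  fixes f :: "complex \<Rightarrow> complex"
  assumes holo: "f holomorphic_on S" and "open S" "compact K" "convex K" "K \<subseteq> S"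
  obtains L where "L-lipschitz_on K f"
proof -
  have "continuous_on K (deriv f)"
    using holomorphic_deriv[OF holo \<open>open S\<close>] \<open>K \<subseteq> S\<close>
    by (intro holomorphic_on_imp_continuous_on) (rule holomorphic_on_subset)
  then have "bounded (deriv f ` K)"
    using \<open>compact K\<close> by (intro compact_imp_bounded compact_continuous_image)
  then obtain L where "L > 0" "\<And>z. z \<in> K \<Longrightarrow> norm (deriv f z) \<le> L"
    by (auto simp: bounded_pos)
  moreover have "(f has_field_derivative deriv f z) (at z within K)" if "z \<in> K" for z
    using holomorphic_derivI[OF holo \<open>open S\<close>] that \<open>K \<subseteq> S\<close> by (blast intro: has_field_derivative_at_within)
  ultimately have "L-lipschitz_on K f"
    using \<open>convex K\<close> by (intro lipschitz_onI) (auto simp: dist_norm intro: field_differentiable_bound)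
  then show ?thesis
    by (rule that)
qed

lemma power_powr_commute: "x > 0 \<Longrightarrow> (x ^ n) powr u = (x powr u) ^ n"
  for x u :: real
  by (subst powr_realpow[symmetric]) (simp_all add: powr_powr powr_power mult.commute)

lemma bounded_image_ball:
  fixes f :: "'a::heine_borel \<Rightarrow> 'b::metric_space"
  assumes "continuous_on (cball a R) f" "r \<le> R"
  shows "bounded (f ` ball a r)"
proof -
  have "bounded (f ` cball a R)"
    using assms(1) by (intro compact_imp_bounded compact_continuous_image compact_cball)
  then show ?thesis
    by (rule bounded_subset) (use assms(2) in auto)
qed

lemma bounded_holomorphic_image_ball:
  assumes "f holomorphic_on ball 0 1" "r < 1"
  shows "bounded (f ` ball 0 r)"
proof -
  have "cball 0 r \<subseteq> ball (0::complex) 1"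
    using assms(2) by auto
  with assms(1) have "continuous_on (cball 0 r) f"
    by (meson holomorphic_on_imp_continuous_on holomorphic_on_subset)
  then show ?thesis
    by (rule bounded_image_ball) simp
qed

lemma holomorphic_on_prod_pair_diff:
  assumes holo: "f holomorphic_on cball 0 R" and w: "\<And>i. i < n \<Longrightarrow> norm (w i) \<le> 1"
  shows "(\<lambda>\<xi>. \<Prod>(j, k)\<in>pairs n. f (\<xi> * w j) - f (\<xi> * w k)) holomorphic_on cball 0 R"
proof -
  have "(\<lambda>\<xi>. f (\<xi> * w i)) holomorphic_on cball 0 R" if "i < n" for i
  proof -
    have "(\<lambda>\<xi>. \<xi> * w i) ` cball 0 R \<subseteq> cball 0 R"
      using w[OF that] by (auto simp: norm_mult intro!: order_trans[OF mult_left_le])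
    then show ?thesis
      using holomorphic_on_compose_gen[OF _ holo, of "\<lambda>\<xi>. \<xi> * w i"]
      by (simp add: o_def holomorphic_intros)
  qed
  then show ?thesis
    unfolding case_prod_unfold by (intro holomorphic_on_prod holomorphic_on_diff) (auto simp: pairs_def)
qed

lemma n_diam_image_ball_three_circles:
  fixes f :: "complex \<Rightarrow> complex"
  assumes holo: "f holomorphic_on cball 0 r2" and n: "n \<ge> 2"
    and r: "0 < r1" "r1 < r2" and uv: "0 \<le> u" "0 \<le> v" "u + v = 1"
    and A: "n_diam n (f ` ball 0 r1) \<le> A" "A > 0"
    and B: "n_diam n (f ` ball 0 r2) \<le> B" "B > 0"
  shows "n_diam n (f ` ball 0 (r1 powr u * r2 powr v)) \<le> A powr u * B powr v"
proof (rule n_diam_le)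
  define r where "r = r1 powr u * r2 powr v"
  have "r > 0"
    using r by (simp add: r_def)
  then show "f ` ball 0 (r1 powr u * r2 powr v) \<noteq> {}"
    by (simp add: r_def)
  fix \<zeta>
  assume "\<zeta> \<in> tuples_in n (f ` ball 0 (r1 powr u * r2 powr v))"
  then obtain a where a: "a \<in> tuples_in n (ball 0 r)" "\<And>i. i < n \<Longrightarrow> \<zeta> i = f (a i)"
    unfolding r_def by (blast dest: tuples_in_image)
  define w where "w i = a i / r" for i
  have w: "norm (w i) < 1" if "i < n" for i
    using a(1) that \<open>r > 0\<close> by (simp add: w_def tuples_in_def norm_divide)
  define h where "h \<xi> = (\<Prod>(j, k)\<in>pairs n. f (\<xi> * w j) - f (\<xi> * w k))" for \<xi>
  have norm_h: "norm (h \<xi>) = pair_dist_prod n (\<lambda>i. f (\<xi> * w i))" for \<xi>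
    by (simp add: h_def pair_dist_prod_def prod_norm case_prod_unfold)
  have "h holomorphic_on cball 0 r2"
    unfolding h_def using holo w by (intro holomorphic_on_prod_pair_diff) (auto intro: less_imp_le)
  then have holo_h: "h holomorphic_on cball 0 r2 - ball 0 r1"
    by (rule holomorphic_on_subset) auto
  have circle: "norm (h \<xi>) \<le> D ^ card (pairs n)"
    if "norm \<xi> = s" "0 < s" "s \<le> r2" "n_diam n (f ` ball 0 s) \<le> D" "D > 0" for \<xi> s D
  proof -
    have "(\<lambda>i. f (\<xi> * w i)) \<in> tuples_in n (f ` ball 0 s)"
      using w that by (auto simp: tuples_in_def norm_mult intro!: imageI)
    with \<open>s \<le> r2\<close> have "mean_pair_dist n (\<lambda>i. f (\<xi> * w i)) \<le> n_diam n (f ` ball 0 s)"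
      using holomorphic_on_imp_continuous_on[OF holo]
      by (intro mean_pair_dist_le_n_diam[OF n bounded_image_ball])
    with that have "mean_pair_dist n (\<lambda>i. f (\<xi> * w i)) \<le> D"
      by linarith
    then show ?thesis
      unfolding norm_h using n \<open>D > 0\<close> by (simp add: mean_pair_dist_le_iff)
  qed
  have \<zeta>_eq: "pair_dist_prod n \<zeta> = norm (h r)"
    unfolding norm_h using a(2) \<open>r > 0\<close> by (intro pair_dist_prod_cong) (simp add: w_def)
  have "norm (h r) \<le> (A ^ card (pairs n)) powr u * (B ^ card (pairs n)) powr v"
  proof (rule hadamard_three_circles[OF holo_h r _ _ _ _ uv])
    show "norm (h \<xi>) \<le> A ^ card (pairs n)" if "norm \<xi> = r1" for \<xi>
      using that r A by (intro circle) auto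
    show "norm (h \<xi>) \<le> B ^ card (pairs n)" if "norm \<xi> = r2" for \<xi>
      using that r B by (intro circle) auto
    show "norm (complex_of_real r) = r1 powr u * r2 powr v"
      using \<open>r > 0\<close> by (simp only: norm_of_real r_def abs_of_pos)
  qed (use A B in auto)
  also have "\<dots> = (A powr u * B powr v) ^ card (pairs n)"
    using A B by (simp add: power_mult_distrib powr_power power_powr_commute)
  finally show "mean_pair_dist n \<zeta> \<le> A powr u * B powr v"
    using n \<open>A > 0\<close> \<open>B > 0\<close> by (simp add: mean_pair_dist_le_iff \<zeta>_eq)
qed

lemma convex_on_n_diam_image_ball:
  fixes f :: "complex \<Rightarrow> complex"
  assumes holo: "f holomorphic_on ball 0 1" and n: "n \<ge> 2"
  shows "convex_on {..<0} (\<lambda>t. n_diam n (f ` ball 0 (exp t)) / exp t)"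
proof (rule convex_on_linorderI)
  define \<Phi> where "\<Phi> s = n_diam n (f ` ball 0 (exp s)) / exp s" for s
  have holo_cball: "f holomorphic_on cball 0 (exp s)" if "s < 0" for s
  proof -
    have "exp s < 1"
      using that by simp
    then have "cball 0 (exp s) \<subseteq> ball (0::complex) 1"
      by (auto intro: order.strict_trans1[OF _ \<open>exp s < 1\<close>])
    then show ?thesis
      by (rule holomorphic_on_subset[OF holo])
  qed
  have bounded: "bounded (f ` ball 0 (exp s))" if "s < 0" for s
    using that by (intro bounded_holomorphic_image_ball[OF holo]) simp
  have \<Phi>_nonneg: "\<Phi> s \<ge> 0" if "s < 0" for s
    unfolding \<Phi>_def using n_diam_nonneg[OF n bounded[OF that]] by simp
  fix t x y :: real
  assume t: "0 < t" "t < 1" and xy: "x \<in> {..<0}" "y \<in> {..<0}" "x < y"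
  define z where "z = (1 - t) *\<^sub>R x + t *\<^sub>R y"
  have "exp x powr (1 - t) * exp y powr t = exp z"
    by (simp add: z_def powr_def exp_add[symmetric] algebra_simps)
  have "\<Phi> z \<le> (1 - t) * \<Phi> x + t * \<Phi> y + \<epsilon>" if "\<epsilon> > 0" for \<epsilon>
  proof -
    have bound: "n_diam n (f ` ball 0 (exp s)) \<le> (\<Phi> s + \<epsilon>) * exp s" "(\<Phi> s + \<epsilon>) * exp s > 0"
      if "s < 0" for s
      using n_diam_nonneg[OF n bounded[OF that]] \<open>\<epsilon> > 0\<close>
      by (auto simp: \<Phi>_def distrib_right intro!: add_nonneg_pos)
    have "n_diam n (f ` ball 0 (exp z))
        \<le> ((\<Phi> x + \<epsilon>) * exp x) powr (1 - t) * ((\<Phi> y + \<epsilon>) * exp y) powr t"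
      unfolding \<open>_ = exp z\<close>[symmetric] using n xy t bound
      by (intro n_diam_image_ball_three_circles holo_cball) auto
    also have "\<dots> = (\<Phi> x + \<epsilon>) powr (1 - t) * (\<Phi> y + \<epsilon>) powr t * exp z"
      using \<open>\<epsilon> > 0\<close> \<Phi>_nonneg[of x] \<Phi>_nonneg[of y] xy
      by (simp add: powr_mult \<open>_ = exp z\<close>[symmetric])
    also have "\<dots> \<le> ((1 - t) * (\<Phi> x + \<epsilon>) + t * (\<Phi> y + \<epsilon>)) * exp z"
      using \<open>\<epsilon> > 0\<close> \<Phi>_nonneg[of x] \<Phi>_nonneg[of y] xy t
      by (intro mult_right_mono Youngs_inequality_0) auto
    finally show ?thesis
      by (simp add: \<Phi>_def field_simps)
  qed
  then show "\<Phi> z \<le> (1 - t) * \<Phi> x + t * \<Phi> y"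
    by (rule field_le_epsilon)
qed simp

lemma mono_on_n_diam_image_ball:
  fixes f :: "complex \<Rightarrow> complex"
  assumes holo: "f holomorphic_on ball 0 1" and n: "n \<ge> 2"
  shows "mono_on {..<0} (\<lambda>t. n_diam n (f ` ball 0 (exp t)) / exp t)"
proof -
  have "cball 0 (1 / 2) \<subseteq> ball (0::complex) 1"
    by auto
  then obtain L where L: "L-lipschitz_on (cball 0 (1 / 2)) f"
    by (rule holomorphic_on_lipschitz_on[OF holo open_ball compact_cball convex_cball])
  have "n_diam n (f ` ball 0 (exp t)) / exp t \<le> L * n_diam n (ball 0 1)" if "t \<le> - ln 2" for t
  proof -
    have "exp t \<le> 1 / 2"
      using that by (metis exp_le_cancel_iff exp_ln_iff exp_minus inverse_eq_divide zero_less_numeral)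
    then have "L-lipschitz_on (ball 0 (exp t)) f"
      by (intro lipschitz_on_subset[OF L]) auto
    then have "n_diam n (f ` ball 0 (exp t)) \<le> L * n_diam n (ball 0 (exp t))"
      using n by (intro n_diam_image_le) auto
    then show ?thesis
      using n_diam_ball[OF n, of "exp t"] by (simp add: field_simps)
  qed
  then show ?thesis
    by (intro mono_on_if_convex_on_bounded_at_bot[OF convex_on_n_diam_image_ball[OF holo n]])
qed

theorem lemma2p1:
  fixes f :: "complex \<Rightarrow> complex" and n :: nat
  assumes "f analytic_on ball 0 1" and "n \<ge> 2"
  shows "mono_on {..<0::real}
           (\<lambda>t. n_diam n (f ` ball 0 (exp t)) / (n_diam n (ball 0 1) * exp t))
       \<and> convex_on {..<0::real}
           (\<lambda>t. n_diam n (f ` ball 0 (exp t)) / (n_diam n (ball 0 1) * exp t))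
       \<and> mono_on {..<0::real}
           (\<lambda>t. log_cap (f ` ball 0 (exp t)) / log_cap (ball 0 (exp t)))
       \<and> convex_on {..<0::real}
           (\<lambda>t. log_cap (f ` ball 0 (exp t)) / log_cap (ball 0 (exp t)))"
proof -
  have holo: "f holomorphic_on ball 0 1"
    using assms(1) by (rule analytic_imp_holomorphic)
  define \<Phi> where "\<Phi> m t = n_diam m (f ` ball 0 (exp t)) / exp t" for m t
  define \<Psi> where "\<Psi> t = log_cap (f ` ball 0 (exp t)) / exp t" for t
  have lim: "(\<lambda>m. \<Phi> m t) \<longlonglongrightarrow> \<Psi> t" if "t \<in> {..<0}" for t
    unfolding \<Phi>_def \<Psi>_def using that
    by (intro tendsto_divide tendsto_const n_diam_LIMSEQ_log_cap bounded_holomorphic_image_ball[OF holo]) auto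
  have \<Phi>: "mono_on {..<0} (\<Phi> m)" "convex_on {..<0} (\<Phi> m)" if "m \<ge> 2" for m
    unfolding \<Phi>_def using holo that by (auto intro: mono_on_n_diam_image_ball convex_on_n_diam_image_ball)
  then have "\<forall>\<^sub>F m in sequentially. mono_on {..<0} (\<Phi> m)" "\<forall>\<^sub>F m in sequentially. convex_on {..<0} (\<Phi> m)"
    by (auto intro: eventually_sequentiallyI[of 2])
  then have "mono_on {..<0} \<Psi>" "convex_on {..<0} \<Psi>"
    by (auto intro: mono_on_LIMSEQ[OF lim] convex_on_LIMSEQ[OF _ lim])
  moreover note \<Phi>[OF assms(2)]
  moreover have "n_diam n (ball 0 1) \<ge> 0" "log_cap (ball 0 1) \<ge> 0"
    using assms(2) by (auto intro: n_diam_nonneg log_cap_nonneg)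
  moreover have "(\<lambda>t. n_diam n (f ` ball 0 (exp t)) / (n_diam n (ball 0 1) * exp t))
      = (\<lambda>t. \<Phi> n t / n_diam n (ball 0 1))"
    by (simp add: \<Phi>_def mult.commute)
  moreover have "(\<lambda>t. log_cap (f ` ball 0 (exp t)) / log_cap (ball 0 (exp t)))
      = (\<lambda>t. \<Psi> t / log_cap (ball 0 1))"
    using log_cap_ball[of "exp _"] by (simp add: \<Psi>_def mult.commute)
  ultimately show ?thesis
    by (simp add: mono_on_cdiv convex_on_cdiv)
qed

end
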